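(* For every sequent $\Gamma\Rightarrow\Delta$ of the logic $\mathtt{TPDL}$: if $\Gamma\Rightarrow\Delta$ is provable in the sequent calculus $\mathtt{GTPDL}$, then $M\models\Gamma\Rightarrow\Delta$ for every model $M$ (i.e. $\Gamma\Rightarrow\Delta$ is valid).
   Context: Fix sets $\mathsf{Prop}$ of propositional variables and $\mathsf{AtProg}$ of atomic programs. Formulas and programs of $\mathtt{TPDL}$ are defined by mutual induction: $\varphi ::= \bot \mid p \mid (\varphi\to\varphi) \mid [\pi]\varphi \mid [\pi]^{\leftarrow}\varphi$ and $\pi ::= \alpha \mid \pi;\pi \mid \pi\cup\pi \mid \pi^{*} \mid \varphi?$, where $p\in\mathsf{Prop}$, $\alpha\in\mathsf{AtProg}$ ($[\pi]^{\leftarrow}$ is the backwards box). Abbreviations: $\neg\varphi:=\varphi\to\bot$, $\langle\pi\rangle\varphi:=\neg[\pi]\neg\varphi$, $\langle\pi\rangle^{\leftarrow}\varphi:=\neg[\pi]^{\leftarrow}\neg\varphi$; for a set $\Gamma$ of formulas, $[\pi]\Gamma=\{[\pi]\varphi:\varphi\in\Gamma\}$ and $[\pi]^{\leftarrow}\Gamma=\{[\pi]^{\leftarrow}\varphi:\varphi\in\Gamma\}$. A model is $M=(W,(R_\alpha)_{\alpha\in\mathsf{AtProg}},V)$ with $W$ a nonempty set of states, $R_\alpha\subseteq W\times W$, $V:W\to\mathcal P(\mathsf{Prop})$. Relations $R_\pi$: $R_{\pi_0;\pi_1}$ is the composition ($w R v$ iff $wR_{\pi_0}u R_{\pi_1}v$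 for some $u$), $R_{\pi_0\cup\pi_1}=R_{\pi_0}\cup R_{\pi_1}$, $R_{\pi^*}$ is the reflexive–transitive closure of $R_\pi$, $R_{\psi?}=\{(w,w):M,w\models\psi\}$. Satisfaction: $M,w\not\models\bot$; $M,w\models p$ iff $p\in V(w)$; $\to$ classical; $M,w\models[\pi]\varphi$ iff $M,v\models\varphi$ for all $v$ with $wR_\pi v$; $M,w\models[\pi]^{\leftarrow}\varphi$ iff $M,v\models\varphi$ for all $v$ with $vR_\pi w$. A sequent $\Gamma\Rightarrow\Delta$ is a pair of finite sets of formulas (commas denote union). $M,w\models\Gamma\Rightarrow\Delta$ means: if $M,w\models\varphi$ for all $\varphi\in\Gamma$ then $M,w\models\psi$ for some $\psi\in\Delta$; $M\models\Gamma\Rightarrow\Delta$ means this holds at every state; valid means $M\models\Gamma\Rightarrow\Delta$ for every model $M$. $\mathtt{GTPDL}$ rules (premises / conclusion): (Ax) no premise, conclusion $\Gamma\Rightarrow\Delta$ with $\Gamma\cap\Delta\neq\emptyset$; ($\bot$) no premise, conclusion $\Gamma,\bot\Rightarrow\Delta$; ($\to$L) $\Gamma\Rightarrow\varphi,\Delta$ and $\Gamma,\psi\Rightarrow\Delta$ / $\Gamma,\varphi\to\psi\Rightarrow\Delta$; ($\to$R) $\Gamma,\varphi\Rightarrow\psi,\Delta$ / $\Gamma\Rightarrow\varphi\to\psi,\Delta$; (Wk) $\Gamma\Rightarrow\Delta$ / $\Gamma'\Rightarrow\Delta'$ with $\Gamma\subseteq\Gamma'$, $\Delta\subseteq\Delta'$;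 (Cut) $\Gamma\Rightarrow\varphi,\Delta$ and $\Gamma,\varphi\Rightarrow\Delta$ / $\Gamma\Rightarrow\Delta$; ($[\,]$) $\Gamma\Rightarrow\varphi,[\pi]^{\leftarrow}\Delta$ / $[\pi]\Gamma\Rightarrow[\pi]\varphi,\Delta$; ($[\,]^{\leftarrow}$) $\Gamma\Rightarrow\varphi,[\pi]\Delta$ / $[\pi]^{\leftarrow}\Gamma\Rightarrow[\pi]^{\leftarrow}\varphi,\Delta$; ($[;]$L) $\Gamma,[\pi_0][\pi_1]\varphi\Rightarrow\Delta$ / $\Gamma,[\pi_0;\pi_1]\varphi\Rightarrow\Delta$; ($[;]$R) $\Gamma\Rightarrow[\pi_0][\pi_1]\varphi,\Delta$ / $\Gamma\Rightarrow[\pi_0;\pi_1]\varphi,\Delta$; ($[\cup]$L) $\Gamma,[\pi_0]\varphi,[\pi_1]\varphi\Rightarrow\Delta$ / $\Gamma,[\pi_0\cup\pi_1]\varphi\Rightarrow\Delta$; ($[\cup]$R) $\Gamma\Rightarrow\Delta,[\pi_0]\varphi$ and $\Gamma\Rightarrow\Delta,[\pi_1]\varphi$ / $\Gamma\Rightarrow[\pi_0\cup\pi_1]\varphi,\Delta$; ($[*]$L) $\Gamma,\varphi,[\pi][\pi^*]\varphi\Rightarrow\Delta$ / $\Gamma,[\pi^*]\varphi\Rightarrow\Delta$; ($[*]$R) $\Gamma,\varphi\Rightarrow[\pi]\varphi$ / $[\pi^*]\Gamma,\varphi\Rightarrow[\pi^*]\varphi$; ($[?]$L) $\Gamma\Rightarrow\varphi,\Delta$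 and $\Gamma,\psi\Rightarrow\Delta$ / $\Gamma,[\varphi?]\psi\Rightarrow\Delta$; ($[?]$R) $\Gamma,\varphi\Rightarrow\psi,\Delta$ / $\Gamma\Rightarrow[\varphi?]\psi,\Delta$. A $\mathtt{GTPDL}$ proof of a sequent is a finite tree of sequents with that sequent at the root, each node being the conclusion of an instance of a rule whose premises are its children (so every leaf is an instance of Ax or $\bot$); a sequent is provable in $\mathtt{GTPDL}$ if it has such a proof. *)

theory Defs
  imports Main "HOL-Library.FSet"
begin

datatype ('p, 'a) fm =
    Bot
  | Var 'p
  | Imp "('p, 'a) fm" "('p, 'a) fm"
  | Box "('p, 'a) prog" "('p, 'a) fm"
  | BBox "('p, 'a) prog" "('p, 'a) fm"
and ('p, 'a) prog =
    Atom 'a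
  | Seq "('p, 'a) prog" "('p, 'a) prog"
  | Choice "('p, 'a) prog" "('p, 'a) prog"
  | Star "('p, 'a) prog"
  | Test "('p, 'a) fm"

record ('p, 'a, 's) model =
  W :: "'s set"
  R :: "'a \<Rightarrow> ('s \<times> 's) set"
  V :: "'s \<Rightarrow> 'p set"

definition is_model :: "('p, 'a, 's) model \<Rightarrow> bool" where
  "is_model M \<longleftrightarrow> W M \<noteq> {} \<and> (\<forall>\<alpha>. R M \<alpha> \<subseteq> W M \<times> W M)"

fun sat :: "('p, 'a, 's) model \<Rightarrow> 's \<Rightarrow> ('p, 'a) fm \<Rightarrow> bool"
and rel :: "('p, 'a, 's) model \<Rightarrow> ('p, 'a) prog \<Rightarrow> ('s \<times> 's) set" where
  "sat M w Bot = False"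
| "sat M w (Var p) = (p \<in> V M w)"
| "sat M w (Imp \<phi> \<psi>) = (sat M w \<phi> \<longrightarrow> sat M w \<psi>)"
| "sat M w (Box \<pi> \<phi>) = (\<forall>v. (w, v) \<in> rel M \<pi> \<longrightarrow> sat M v \<phi>)"
| "sat M w (BBox \<pi> \<phi>) = (\<forall>v. (v, w) \<in> rel M \<pi> \<longrightarrow> sat M v \<phi>)"
| "rel M (Atom \<alpha>) = R M \<alpha>"
| "rel M (Seq \<pi>0 \<pi>1) = rel M \<pi>0 O rel M \<pi>1"
| "rel M (Choice \<pi>0 \<pi>1) = rel M \<pi>0 \<union> rel M \<pi>1"
| "rel M (Star \<pi>) = Id_on (W M) \<union> (rel M \<pi>)\<^sup>+"
| "rel M (Test \<psi>) = {(w, w) | w. w \<in> W M \<and> sat M w \<psi>}"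

definition sat_seq :: "('p, 'a, 's) model \<Rightarrow> 's \<Rightarrow> ('p, 'a) fm fset \<Rightarrow> ('p, 'a) fm fset \<Rightarrow> bool" where
  "sat_seq M w \<Gamma> \<Delta> \<longleftrightarrow> ((\<forall>\<phi>. \<phi> |\<in>| \<Gamma> \<longrightarrow> sat M w \<phi>) \<longrightarrow> (\<exists>\<psi>. \<psi> |\<in>| \<Delta> \<and> sat M w \<psi>))"

definition model_sat_seq :: "('p, 'a, 's) model \<Rightarrow> ('p, 'a) fm fset \<Rightarrow> ('p, 'a) fm fset \<Rightarrow> bool" where
  "model_sat_seq M \<Gamma> \<Delta> \<longleftrightarrow> (\<forall>w \<in> W M. sat_seq M w \<Gamma> \<Delta>)"

abbreviation boxes :: "('p, 'a) prog \<Rightarrow> ('p, 'a) fm fset \<Rightarrow> ('p, 'a) fm fset" where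
  "boxes \<pi> \<Gamma> \<equiv> fimage (Box \<pi>) \<Gamma>"

abbreviation bboxes :: "('p, 'a) prog \<Rightarrow> ('p, 'a) fm fset \<Rightarrow> ('p, 'a) fm fset" where
  "bboxes \<pi> \<Gamma> \<equiv> fimage (BBox \<pi>) \<Gamma>"

inductive provable :: "('p, 'a) fm fset \<Rightarrow> ('p, 'a) fm fset \<Rightarrow> bool" where
  Ax: "\<Gamma> |\<inter>| \<Delta> \<noteq> {||} \<Longrightarrow> provable \<Gamma> \<Delta>"
| BotL: "provable (finsert Bot \<Gamma>) \<Delta>"
| ImpL: "provable \<Gamma> (finsert \<phi> \<Delta>) \<Longrightarrow> provable (finsert \<psi> \<Gamma>) \<Delta>
         \<Longrightarrow> provable (finsert (Imp \<phi> \<psi>) \<Gamma>) \<Delta>"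
| ImpR: "provable (finsert \<phi> \<Gamma>) (finsert \<psi> \<Delta>) \<Longrightarrow> provable \<Gamma> (finsert (Imp \<phi> \<psi>) \<Delta>)"
| Wk: "provable \<Gamma> \<Delta> \<Longrightarrow> \<Gamma> |\<subseteq>| \<Gamma>' \<Longrightarrow> \<Delta> |\<subseteq>| \<Delta>' \<Longrightarrow> provable \<Gamma>' \<Delta>'"
| Cut: "provable \<Gamma> (finsert \<phi> \<Delta>) \<Longrightarrow> provable (finsert \<phi> \<Gamma>) \<Delta> \<Longrightarrow> provable \<Gamma> \<Delta>"
| BoxR: "provable \<Gamma> (finsert \<phi> (bboxes \<pi> \<Delta>))
         \<Longrightarrow> provable (boxes \<pi> \<Gamma>) (finsert (Box \<pi> \<phi>) \<Delta>)"
| BBoxR: "provable \<Gamma> (finsert \<phi> (boxes \<pi> \<Delta>))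
         \<Longrightarrow> provable (bboxes \<pi> \<Gamma>) (finsert (BBox \<pi> \<phi>) \<Delta>)"
| SeqL: "provable (finsert (Box \<pi>0 (Box \<pi>1 \<phi>)) \<Gamma>) \<Delta>
         \<Longrightarrow> provable (finsert (Box (Seq \<pi>0 \<pi>1) \<phi>) \<Gamma>) \<Delta>"
| SeqR: "provable \<Gamma> (finsert (Box \<pi>0 (Box \<pi>1 \<phi>)) \<Delta>)
         \<Longrightarrow> provable \<Gamma> (finsert (Box (Seq \<pi>0 \<pi>1) \<phi>) \<Delta>)"
| ChoiceL: "provable (finsert (Box \<pi>0 \<phi>) (finsert (Box \<pi>1 \<phi>) \<Gamma>)) \<Delta>
         \<Longrightarrow> provable (finsert (Box (Choice \<pi>0 \<pi>1) \<phi>) \<Gamma>) \<Delta>"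
| ChoiceR: "provable \<Gamma> (finsert (Box \<pi>0 \<phi>) \<Delta>) \<Longrightarrow> provable \<Gamma> (finsert (Box \<pi>1 \<phi>) \<Delta>)
         \<Longrightarrow> provable \<Gamma> (finsert (Box (Choice \<pi>0 \<pi>1) \<phi>) \<Delta>)"
| StarL: "provable (finsert \<phi> (finsert (Box \<pi> (Box (Star \<pi>) \<phi>)) \<Gamma>)) \<Delta>
         \<Longrightarrow> provable (finsert (Box (Star \<pi>) \<phi>) \<Gamma>) \<Delta>"
| StarR: "provable (finsert \<phi> \<Gamma>) {|Box \<pi> \<phi>|}
         \<Longrightarrow> provable (finsert \<phi> (boxes (Star \<pi>) \<Gamma>)) {|Box (Star \<pi>) \<phi>|}"
| TestL: "provable \<Gamma> (finsert \<phi> \<Delta>) \<Longrightarrow> provable (finsert \<psi> \<Gamma>) \<Delta>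
         \<Longrightarrow> provable (finsert (Box (Test \<phi>) \<psi>) \<Gamma>) \<Delta>"
| TestR: "provable (finsert \<phi> \<Gamma>) (finsert \<psi> \<Delta>) \<Longrightarrow> provable \<Gamma> (finsert (Box (Test \<phi>) \<psi>) \<Delta>)"

end

theory Submission
  imports Defs
begin

(* Most rules are sound state by state.  The two box rules need the
   premise at every successor v of w: the backward boxes in the premise carry a formula of
   Delta true at v back to w.  The star induction rule is induction along the reflexive
   transitive closure of R_pi, which agrees with R_(pi star) on states of W. *)

lemma rel_subset_W: "is_model M \<Longrightarrow> rel M \<pi> \<subseteq> W M \<times> W M"
proof (induction \<pi>)
  case (Star \<pi>)
  then show ?case
    using trancl_subset_Sigma[of "rel M \<pi>" "W M"] by (auto simp: Id_on_def)
qed (auto simp: is_model_def)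

lemma rel_Star_iff_rtrancl:
  "w \<in> W M \<Longrightarrow> (w, v) \<in> rel M (Star \<pi>) \<longleftrightarrow> (w, v) \<in> (rel M \<pi>)\<^sup>*"
  by (auto simp: rtrancl_eq_or_trancl)

lemma rtrancl_rel_closed_W:
  "is_model M \<Longrightarrow> w \<in> W M \<Longrightarrow> (w, v) \<in> (rel M \<pi>)\<^sup>* \<Longrightarrow> v \<in> W M"
  using rel_subset_W[of M "Star \<pi>"] rel_Star_iff_rtrancl[of w M v \<pi>] by blast

lemma sat_Box_Star_iff:
  "w \<in> W M \<Longrightarrow> sat M w (Box (Star \<pi>) \<phi>) \<longleftrightarrow> (\<forall>v. (w, v) \<in> (rel M \<pi>)\<^sup>* \<longrightarrow> sat M v \<phi>)"
  using rel_Star_iff_rtrancl[of w M _ \<pi>] by (simp only: sat.simps)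

lemma All_rtrancl_unfold:
  "(\<forall>v. (w, v) \<in> r\<^sup>* \<longrightarrow> P v) \<longleftrightarrow> P w \<and> (\<forall>u. (w, u) \<in> r \<longrightarrow> (\<forall>v. (u, v) \<in> r\<^sup>* \<longrightarrow> P v))"
proof (intro iffI conjI allI impI)
  show "P w" if "\<forall>v. (w, v) \<in> r\<^sup>* \<longrightarrow> P v"
    using that by simp
  show "P v" if "\<forall>v. (w, v) \<in> r\<^sup>* \<longrightarrow> P v" "(w, u) \<in> r" "(u, v) \<in> r\<^sup>*" for u v
    using that(1) converse_rtrancl_into_rtrancl[OF that(2,3)] by simp
  show "P v" if "P w \<and> (\<forall>u. (w, u) \<in> r \<longrightarrow> (\<forall>v. (u, v) \<in> r\<^sup>* \<longrightarrow> P v))" "(w, v) \<in> r\<^sup>*" for v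
    using that(2) by (cases rule: converse_rtranclE) (use that(1) in simp_all)
qed

lemma sat_Box_Star_unfold:
  assumes "is_model M" "w \<in> W M"
  shows "sat M w (Box (Star \<pi>) \<phi>) \<longleftrightarrow> sat M w \<phi> \<and> sat M w (Box \<pi> (Box (Star \<pi>) \<phi>))"
proof -
  have successor: "sat M u (Box (Star \<pi>) \<phi>) \<longleftrightarrow> (\<forall>v. (u, v) \<in> (rel M \<pi>)\<^sup>* \<longrightarrow> sat M v \<phi>)"
    if "(w, u) \<in> rel M \<pi>" for u
  proof -
    have "u \<in> W M" using that rel_subset_W[OF assms(1)] by blast
    then show ?thesis by (rule sat_Box_Star_iff)
  qed
  have "sat M w (Box (Star \<pi>) \<phi>) \<longleftrightarrow> (\<forall>v. (w, v) \<in> (rel M \<pi>)\<^sup>* \<longrightarrow> sat M v \<phi>)"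
    by (rule sat_Box_Star_iff[OF assms(2)])
  also have "\<dots> \<longleftrightarrow>
      sat M w \<phi> \<and> (\<forall>u. (w, u) \<in> rel M \<pi> \<longrightarrow> (\<forall>v. (u, v) \<in> (rel M \<pi>)\<^sup>* \<longrightarrow> sat M v \<phi>))"
    by (rule All_rtrancl_unfold)
  also have "\<dots> \<longleftrightarrow> sat M w \<phi> \<and> sat M w (Box \<pi> (Box (Star \<pi>) \<phi>))"
    using successor by (simp only: sat.simps(4)) blast
  finally show ?thesis .
qed

lemma sat_Box_Star_induct:
  assumes "w \<in> W M" "sat M w \<phi>"
    and step: "\<And>v. (w, v) \<in> (rel M \<pi>)\<^sup>* \<Longrightarrow> sat M v \<phi> \<Longrightarrow> sat M v (Box \<pi> \<phi>)"
  shows "sat M w (Box (Star \<pi>) \<phi>)"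
  unfolding sat_Box_Star_iff[OF assms(1)]
proof (intro allI impI)
  show "(w, v) \<in> (rel M \<pi>)\<^sup>* \<Longrightarrow> sat M v \<phi>" for v
    by (induction rule: rtrancl_induct) (use assms(2) step in auto)
qed

lemma sat_seq_finsert_left:
  "sat_seq M w (finsert \<phi> \<Gamma>) \<Delta> \<longleftrightarrow> (sat M w \<phi> \<longrightarrow> sat_seq M w \<Gamma> \<Delta>)"
  by (auto simp: sat_seq_def)

lemma sat_seq_finsert_right:
  "sat_seq M w \<Gamma> (finsert \<psi> \<Delta>) \<longleftrightarrow> sat_seq M w \<Gamma> \<Delta> \<or> sat M w \<psi>"
  by (auto simp: sat_seq_def)

lemma model_sat_seq_adjoint_box_rule:
  assumes S: "S \<subseteq> W M \<times> W M"
    and box: "\<And>w \<psi>. sat M w (box \<psi>) \<longleftrightarrow> (\<forall>v. (w, v) \<in> S \<longrightarrow> sat M v \<psi>)"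
    and bbox: "\<And>w \<psi>. sat M w (bbox \<psi>) \<longleftrightarrow> (\<forall>v. (v, w) \<in> S \<longrightarrow> sat M v \<psi>)"
    and prem: "model_sat_seq M \<Gamma> (finsert \<phi> (bbox |`| \<Delta>))"
  shows "model_sat_seq M (box |`| \<Gamma>) (finsert (box \<phi>) \<Delta>)"
  unfolding model_sat_seq_def sat_seq_def
proof (intro ballI impI)
  fix w assume "w \<in> W M" and \<Gamma>_w: "\<forall>\<chi>. \<chi> |\<in>| box |`| \<Gamma> \<longrightarrow> sat M w \<chi>"
  show "\<exists>\<psi>. \<psi> |\<in>| finsert (box \<phi>) \<Delta> \<and> sat M w \<psi>"
  proof (rule ccontr)
    assume refuted: "\<not> ?thesis"
    have "sat M v \<phi>" if wv: "(w, v) \<in> S" for v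
    proof -
      have "v \<in> W M" using wv S by blast
      moreover have "\<forall>\<chi>. \<chi> |\<in>| \<Gamma> \<longrightarrow> sat M v \<chi>" using \<Gamma>_w wv box by auto
      ultimately obtain \<psi> where "\<psi> |\<in>| finsert \<phi> (bbox |`| \<Delta>)" "sat M v \<psi>"
        using prem unfolding model_sat_seq_def sat_seq_def by blast
      then show ?thesis using refuted wv bbox by auto
    qed
    then show False using refuted box by auto
  qed
qed

lemma model_sat_seq_StarR:
  assumes "is_model M" and prem: "model_sat_seq M (finsert \<phi> \<Gamma>) {|Box \<pi> \<phi>|}"
  shows "model_sat_seq M (finsert \<phi> (boxes (Star \<pi>) \<Gamma>)) {|Box (Star \<pi>) \<phi>|}"
  unfolding model_sat_seq_def sat_seq_def
proof (intro ballI impI)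
  fix w assume w: "w \<in> W M" and hyps: "\<forall>\<chi>. \<chi> |\<in>| finsert \<phi> (boxes (Star \<pi>) \<Gamma>) \<longrightarrow> sat M w \<chi>"
  have "sat M w (Box (Star \<pi>) \<phi>)"
  proof (rule sat_Box_Star_induct[OF w])
    show "sat M w \<phi>" using hyps by simp
  next
    fix v assume wv: "(w, v) \<in> (rel M \<pi>)\<^sup>*" and \<phi>_v: "sat M v \<phi>"
    have \<Gamma>_v: "sat M v \<chi>" if "\<chi> |\<in>| \<Gamma>" for \<chi>
    proof -
      have "Box (Star \<pi>) \<chi> |\<in>| finsert \<phi> (boxes (Star \<pi>) \<Gamma>)" using that by simp
      then have "sat M w (Box (Star \<pi>) \<chi>)" using hyps by blast
      then show ?thesis using wv by (simp only: sat_Box_Star_iff[OF w])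
    qed
    have "v \<in> W M" using rtrancl_rel_closed_W[OF assms(1) w wv] .
    then have "sat_seq M v (finsert \<phi> \<Gamma>) {|Box \<pi> \<phi>|}"
      using prem unfolding model_sat_seq_def by blast
    then show "sat M v (Box \<pi> \<phi>)"
      using \<phi>_v \<Gamma>_v unfolding sat_seq_def by (simp del: sat.simps)
  qed
  then show "\<exists>\<psi>. \<psi> |\<in>| {|Box (Star \<pi>) \<phi>|} \<and> sat M w \<psi>" by simp
qed

theorem mainTheorem1:
  fixes \<Gamma> \<Delta> :: "('p, 'a) fm fset" and M :: "('p, 'a, 's) model"
  assumes "provable \<Gamma> \<Delta>"
      and "is_model M"
  shows "model_sat_seq M \<Gamma> \<Delta>"
  using assms(1)
proof (induction rule: provable.induct)
  case (BoxR \<Gamma> \<phi> \<pi> \<Delta>)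
  then show ?case
    by (intro model_sat_seq_adjoint_box_rule[where S = "rel M \<pi>"] rel_subset_W[OF assms(2)]) simp_all
next
  case (BBoxR \<Gamma> \<phi> \<pi> \<Delta>)
  then show ?case
    using rel_subset_W[OF assms(2), of \<pi>]
    by (intro model_sat_seq_adjoint_box_rule[where S = "(rel M \<pi>)\<inverse>"]) auto
next
  case (StarL \<phi> \<pi> \<Gamma> \<Delta>)
  then show ?case
    using sat_Box_Star_unfold[OF assms(2)] by (auto simp: model_sat_seq_def sat_seq_finsert_left)
next
  case (StarR \<phi> \<Gamma> \<pi>)
  show ?case using StarR.IH by (rule model_sat_seq_StarR[OF assms(2)])
next
  case (Ax \<Gamma> \<Delta>)
  then show ?case by (fastforce simp: model_sat_seq_def sat_seq_def)
next
  case (Wk \<Gamma> \<Delta> \<Gamma>' \<Delta>')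
  then show ?case unfolding model_sat_seq_def sat_seq_def by blast
qed (auto simp: model_sat_seq_def sat_seq_finsert_left sat_seq_finsert_right)

end
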